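(* For every $\bm U\in\mathbb V_h$, $|\bm U|_{1,h}\le\frac{\pi}{2}\|\nabla_h\bm U\|_h$.
   Context: $\Omega=[x_L,x_R]\times[y_L,y_R]$, $l_1=x_R-x_L$, $l_2=y_R-y_L$, $N_1,N_2$ even, $h_r=l_r/N_r$, grid points $x_{j_1}=x_L+j_1h_1$, $y_{j_2}=y_L+j_2h_2$, $0\le j_r\le N_r-1$. $\mathbb V_h$: doubly periodic grid functions identified with vectors $\bm U=(U_{0,0},U_{1,0},\dots,U_{N_1-1,0},U_{0,1},\dots,U_{N_1-1,N_2-1})^T$. $\langle\bm U,\bm V\rangle_h=h_1h_2\sum_{j_1,j_2}U_{j_1,j_2}V_{j_1,j_2}$, $\|\bm U\|_h^2=\langle\bm U,\bm U\rangle_h$. $\delta_x^+U_{j_1,j_2}=(U_{j_1+1,j_2}-U_{j_1,j_2})/h_1$, $\delta_y^+U_{j_1,j_2}=(U_{j_1,j_2+1}-U_{j_1,j_2})/h_2$, $\|\nabla_h\bm U\|_h^2=\|\delta_x^+\bm U\|_h^2+\|\delta_y^+\bm U\|_h^2$. With $\mu_r=2\pi/l_r$, $g^{(1)}_k(x)=\frac1{N_1}\sum_{l=-N_1/2}^{N_1/2}\frac1{a_l}e^{\mathrm il\mu_1(x-x_k)}$, $a_l=1$ for $|l|<N_1/2$, $a_{\pm N_1/2}=2$ (similarly $g^{(2)}_k(y)$), $\bm D_1^x=((g^{(1)}_k)'(x_j))_{j,k=0}^{N_1-1}$, $\bm D_1^y=((g^{(2)}_k)'(y_j))_{j,k=0}^{N_2-1}$,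 and $|\bm U|_{1,h}^2=\langle-(\bm I_{N_2}\otimes(\bm D_1^x)^2+(\bm D_1^y)^2\otimes\bm I_{N_1})\bm U,\bm U\rangle_h$ ($\otimes$ Kronecker product). *)

theory Defs
  imports "HOL-Analysis.Analysis"
begin

definition grid_pt :: "real \<Rightarrow> real \<Rightarrow> nat \<Rightarrow> nat \<Rightarrow> real" where
  "grid_pt lo hi N j = lo + real j * ((hi - lo) / real N)"

definition a_coef :: "nat \<Rightarrow> int \<Rightarrow> real" where
  "a_coef N l = (if \<bar>l\<bar> = int N div 2 then 2 else 1)"

definition gbasis :: "real \<Rightarrow> real \<Rightarrow> nat \<Rightarrow> nat \<Rightarrow> real \<Rightarrow> complex" where
  "gbasis lo hi N k x =
     (1 / of_nat N) * (\<Sum>l\<in>{-(int N div 2)..int N div 2}.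
        complex_of_real (1 / a_coef N l) *
        exp (\<i> * of_int l * complex_of_real (2 * pi / (hi - lo)) * complex_of_real (x - grid_pt lo hi N k)))"

definition Dmat :: "real \<Rightarrow> real \<Rightarrow> nat \<Rightarrow> nat \<Rightarrow> nat \<Rightarrow> complex" where
  "Dmat lo hi N j k = vector_derivative (gbasis lo hi N k) (at (grid_pt lo hi N j))"

definition D2mat :: "real \<Rightarrow> real \<Rightarrow> nat \<Rightarrow> nat \<Rightarrow> nat \<Rightarrow> complex" where
  "D2mat lo hi N j k = (\<Sum>m<N. Dmat lo hi N j m * Dmat lo hi N m k)"

text \<open>Grid functions are U :: nat => nat => real, only values at 0 <= j1 < N1, 0 <= j2 < N2 matter;
  periodicity is realized by indices mod N.\<close>

definition inner_h :: "real \<Rightarrow> real \<Rightarrow> nat \<Rightarrow> real \<Rightarrow> real \<Rightarrow> nat \<Rightarrow>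
    (nat \<Rightarrow> nat \<Rightarrow> real) \<Rightarrow> (nat \<Rightarrow> nat \<Rightarrow> real) \<Rightarrow> real" where
  "inner_h xL xR N1 yL yR N2 U V =
     ((xR - xL) / real N1) * ((yR - yL) / real N2) *
     (\<Sum>j1<N1. \<Sum>j2<N2. U j1 j2 * V j1 j2)"

definition dxp :: "real \<Rightarrow> real \<Rightarrow> nat \<Rightarrow> nat \<Rightarrow> (nat \<Rightarrow> nat \<Rightarrow> real) \<Rightarrow> nat \<Rightarrow> nat \<Rightarrow> real" where
  "dxp xL xR N1 N2 U j1 j2 = (U ((j1 + 1) mod N1) (j2 mod N2) - U (j1 mod N1) (j2 mod N2)) / ((xR - xL) / real N1)"

definition dyp :: "real \<Rightarrow> real \<Rightarrow> nat \<Rightarrow> nat \<Rightarrow> (nat \<Rightarrow> nat \<Rightarrow> real) \<Rightarrow> nat \<Rightarrow> nat \<Rightarrow> real" where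
  "dyp yL yR N1 N2 U j1 j2 = (U (j1 mod N1) ((j2 + 1) mod N2) - U (j1 mod N1) (j2 mod N2)) / ((yR - yL) / real N2)"

definition grad_norm_sq :: "real \<Rightarrow> real \<Rightarrow> nat \<Rightarrow> real \<Rightarrow> real \<Rightarrow> nat \<Rightarrow> (nat \<Rightarrow> nat \<Rightarrow> real) \<Rightarrow> real" where
  "grad_norm_sq xL xR N1 yL yR N2 U =
     inner_h xL xR N1 yL yR N2 (dxp xL xR N1 N2 U) (dxp xL xR N1 N2 U) +
     inner_h xL xR N1 yL yR N2 (dyp yL yR N1 N2 U) (dyp yL yR N1 N2 U)"

text \<open>|U|_{1,h}^2 = < -(I_{N2} (x) (D^x)^2 + (D^y)^2 (x) I_{N1}) U, U >_h, with U ordered so that j1 runs fastest;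
  hence ((I (x) A) U)_{j1,j2} = sum_k A_{j1 k} U_{k j2} and ((B (x) I) U)_{j1,j2} = sum_k B_{j2 k} U_{j1 k}.
  The value is real; we take the real part of the complex expression.\<close>
definition semi1_sq :: "real \<Rightarrow> real \<Rightarrow> nat \<Rightarrow> real \<Rightarrow> real \<Rightarrow> nat \<Rightarrow> (nat \<Rightarrow> nat \<Rightarrow> real) \<Rightarrow> real" where
  "semi1_sq xL xR N1 yL yR N2 U =
     Re (complex_of_real (((xR - xL) / real N1) * ((yR - yL) / real N2)) *
       (\<Sum>j1<N1. \<Sum>j2<N2.
          - ((\<Sum>k<N1. D2mat xL xR N1 j1 k * complex_of_real (U k j2)) +
             (\<Sum>k<N2. D2mat yL yR N2 j2 k * complex_of_real (U j1 k)))
          * complex_of_real (U j1 j2)))"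

end

theory Submission
  imports Defs
begin

text \<open>
  On the periodic grid the spectral differentiation matrix is circulant: with
  \<open>\<omega> = exp (2 \<pi> i / N)\<close> its entries are \<open>(1/N) \<Sum>\<^bsub>|l| < N/2\<^esub> i l \<mu> \<omega>^(l (j - k))\<close>,
  the two Nyquist modes \<open>l = \<plusminus>N/2\<close> cancelling.  Orthogonality of the roots of unity
  then gives \<open>-\<langle>D\<^sub>1\<^sup>2 u, u\<rangle> = (1/N) \<Sum>\<^bsub>|l| < N/2\<^esub> (l \<mu>)\<^sup>2 |\<hat>u\<^sub>l|\<^sup>2\<close>.  The forward
  difference quotient has symbol \<open>(\<omega>^l - 1)/h\<close> and \<open>|\<omega>^l - 1| = 2 |sin (\<pi> l / N)|\<close>,
  so Jordan's inequality \<open>sin x \<ge> 2x/\<pi>\<close> on \<open>[0, \<pi>/2]\<close> yields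
  \<open>(l \<mu>)\<^sup>2 \<le> (\<pi>/2)\<^sup>2 |(\<omega>^l - 1)/h|\<^sup>2\<close>.  Enlarging the frequency range to a full period
  and applying Parseval turns the right-hand side back into the squared norm of the
  difference quotient.  Summing this one-dimensional estimate over all grid lines in
  both directions gives the theorem.
\<close>

definition unity_root :: "nat \<Rightarrow> int \<Rightarrow> complex" where
  "unity_root N t = cis (2 * pi * of_int t / of_nat N)"

lemma unity_root_add: "unity_root N (a + b) = unity_root N a * unity_root N b"
  by (simp add: unity_root_def cis_mult add_divide_distrib distrib_left)

lemma cnj_unity_root: "cnj (unity_root N t) = unity_root N (- t)"
  by (simp add: unity_root_def cis_cnj)

lemma unity_root_power: "unity_root N t ^ m = unity_root N (t * int m)"
  unfolding unity_root_def Complex.DeMoivre by (simp add: field_simps)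

lemma unity_root_eq_1_iff:
  assumes "N > 0"
  shows "unity_root N t = 1 \<longleftrightarrow> int N dvd t"
proof
  assume "unity_root N t = 1"
  then have "cos (2 * pi * of_int t / real N) = 1"
    by (simp add: unity_root_def complex_eq_iff)
  then obtain n :: int where "2 * pi * of_int t / real N = of_int n * 2 * pi"
    by (auto simp: cos_one_2pi_int)
  then have "real_of_int t = real_of_int (n * int N)"
    using assms by (simp add: field_simps)
  then show "int N dvd t"
    by (simp only: of_int_eq_iff) simp
next
  assume "int N dvd t"
  then obtain n where "t = int N * n" ..
  then have "2 * pi * of_int t / real N = 2 * pi * of_int n"
    using assms by simp
  then show "unity_root N t = 1"
    unfolding unity_root_def by (metis cis_multiple_2pi Ints_of_int)
qed

lemma unity_root_cong:
  assumes "N > 0" "int N dvd a - b"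
  shows "unity_root N a = unity_root N b"
  using unity_root_add[of N b "a - b"] assms by (simp add: unity_root_eq_1_iff)

lemma sum_unity_root:
  assumes "N > 0"
  shows "(\<Sum>m<N. unity_root N (t * int m)) = (if int N dvd t then of_nat N else 0)"
proof (cases "int N dvd t")
  case True
  then have "unity_root N (t * int m) = 1" for m
    using assms by (simp add: unity_root_eq_1_iff)
  then show ?thesis
    using True by simp
next
  case False
  then have "unity_root N t \<noteq> 1"
    using assms by (simp add: unity_root_eq_1_iff)
  moreover have "unity_root N t ^ N = 1"
    using assms by (simp add: unity_root_power unity_root_eq_1_iff)
  ultimately show ?thesis
    using False by (simp add: unity_root_power [symmetric] geometric_sum)
qed

lemma sum_unity_root_period:
  assumes "N > 0"
  shows "(\<Sum>l\<in>{a..<a + int N}. unity_root N (l * t)) = (if int N dvd t then of_nat N else 0)"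
proof -
  have "(\<Sum>l\<in>{a..<a + int N}. unity_root N (l * t)) = (\<Sum>m<N. unity_root N ((a + int m) * t))"
    by (rule sum.reindex_bij_witness[where i="\<lambda>l. a + int l" and j="\<lambda>l. nat (l - a)"]) auto
  also have "\<dots> = unity_root N (a * t) * (\<Sum>m<N. unity_root N (t * int m))"
    unfolding sum_distrib_left by (intro sum.cong refl) (simp add: unity_root_add [symmetric] algebra_simps)
  finally show ?thesis
    using assms by (simp add: sum_unity_root unity_root_eq_1_iff)
qed

lemma norm_unity_root_minus_1_sq:
  "(norm (unity_root N l - 1))\<^sup>2 = 4 * (sin (pi * of_int l / real N))\<^sup>2"
proof -
  define x where "x = pi * of_int l / real N"
  have "(norm (unity_root N l - 1))\<^sup>2 = (cos (2 * x) - 1)\<^sup>2 + (sin (2 * x))\<^sup>2"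
    by (simp add: unity_root_def x_def cmod_power2 mult.assoc)
  also have "\<dots> = 2 - 2 * cos (2 * x)"
    using sin_cos_squared_add[of "2 * x"] by (simp add: power2_eq_square algebra_simps)
  also have "\<dots> = 4 * (sin x)\<^sup>2"
    by (simp add: cos_double_sin)
  finally show ?thesis
    by (simp add: x_def)
qed

definition dft :: "nat \<Rightarrow> (nat \<Rightarrow> real) \<Rightarrow> int \<Rightarrow> complex" where
  "dft N u l = (\<Sum>k<N. of_real (u k) * unity_root N (- (l * int k)))"

lemma cnj_dft: "cnj (dft N u l) = (\<Sum>k<N. of_real (u k) * unity_root N (l * int k))"
  by (simp add: dft_def cnj_unity_root)

lemma sum_lessThan_rotate:
  fixes N :: nat
  assumes "N > 0"
  shows "(\<Sum>j<N. g ((j + 1) mod N)) = (\<Sum>j<N. g j)"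
proof -
  obtain n where N: "N = Suc n"
    using assms gr0_implies_Suc by blast
  have "(\<Sum>j<N. g ((j + 1) mod N)) = (\<Sum>j<n. g (Suc j)) + g 0"
    unfolding N by (simp add: sum.lessThan_Suc)
  also have "\<dots> = (\<Sum>j<N. g j)"
    unfolding N sum.lessThan_Suc_shift by (simp add: add.commute)
  finally show ?thesis .
qed

lemma dft_rotate:
  assumes "N > 0"
  shows "dft N (\<lambda>j. u ((j + 1) mod N)) l = unity_root N l * dft N u l"
proof -
  have shift: "unity_root N (- (l * int j)) = unity_root N l * unity_root N (- (l * int ((j + 1) mod N)))" for j
  proof -
    have "int N dvd int ((j + 1) mod N) - int (j + 1)"
      by (simp add: of_nat_mod mod_eq_dvd_iff [symmetric])
    then have "int N dvd l * (int ((j + 1) mod N) - int (j + 1))"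
      by (rule dvd_mult)
    also have "l * (int ((j + 1) mod N) - int (j + 1)) = - (l * int j) - (l + - (l * int ((j + 1) mod N)))"
      by (simp add: algebra_simps)
    finally have "unity_root N (- (l * int j)) = unity_root N (l + - (l * int ((j + 1) mod N)))"
      using assms by (rule unity_root_cong [rotated])
    then show ?thesis
      by (simp only: unity_root_add)
  qed
  have "dft N (\<lambda>j. u ((j + 1) mod N)) l
      = unity_root N l * (\<Sum>j<N. of_real (u ((j + 1) mod N)) * unity_root N (- (l * int ((j + 1) mod N))))"
    unfolding dft_def sum_distrib_left
  proof (rule sum.cong [OF refl])
    fix j
    show "of_real (u ((j + 1) mod N)) * unity_root N (- (l * int j))
        = unity_root N l * (of_real (u ((j + 1) mod N)) * unity_root N (- (l * int ((j + 1) mod N))))"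
      by (simp only: shift [of j] mult_ac)
  qed
  also have "\<dots> = unity_root N l * dft N u l"
    unfolding dft_def sum_lessThan_rotate [OF assms, where g = "\<lambda>k. of_real (u k) * unity_root N (- (l * int k))"] ..
  finally show ?thesis .
qed

lemma dft_divided_difference:
  assumes "N > 0"
  shows "dft N (\<lambda>j. (u ((j + 1) mod N) - u j) / h) l = (unity_root N l - 1) / of_real h * dft N u l"
proof -
  have "dft N (\<lambda>j. (u ((j + 1) mod N) - u j) / h) l = (dft N (\<lambda>j. u ((j + 1) mod N)) l - dft N u l) / of_real h"
    by (simp add: dft_def sum_subtractf sum_divide_distrib diff_divide_distrib left_diff_distrib)
  also have "\<dots> = (unity_root N l * dft N u l - dft N u l) / of_real h"
    by (simp only: dft_rotate [OF assms])
  finally show ?thesis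
    by (simp add: left_diff_distrib)
qed

lemma parseval_dft:
  assumes "N > 0"
  shows "(\<Sum>l\<in>{a..<a + int N}. (norm (dft N v l))\<^sup>2) = real N * (\<Sum>j<N. (v j)\<^sup>2)"
proof -
  have "of_real (\<Sum>l\<in>{a..<a + int N}. (norm (dft N v l))\<^sup>2)
      = (\<Sum>l\<in>{a..<a + int N}. \<Sum>j<N. \<Sum>k<N. of_real (v j * v k) * unity_root N (l * (int k - int j)))"
    unfolding of_real_sum complex_norm_square cnj_dft unfolding dft_def sum_product
    by (intro sum.cong refl) (simp add: unity_root_add [symmetric] algebra_simps)
  also have "\<dots> = (\<Sum>j<N. \<Sum>k<N. of_real (v j * v k) * (\<Sum>l\<in>{a..<a + int N}. unity_root N (l * (int k - int j))))"
    by (simp only: sum_distrib_left sum.swap [where A = "{a..<a + int N}"])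
  also have "\<dots> = (\<Sum>j<N. \<Sum>k<N. if k = j then of_real (v j * v k) * of_nat N else 0)"
  proof (intro sum.cong refl)
    fix j k
    assume "j \<in> {..<N}" "k \<in> {..<N}"
    then have "int N dvd int k - int j \<longleftrightarrow> k = j"
      by (simp add: mod_eq_dvd_iff [symmetric])
    then show "of_real (v j * v k) * (\<Sum>l\<in>{a..<a + int N}. unity_root N (l * (int k - int j)))
        = (if k = j then of_real (v j * v k) * of_nat N else 0)"
      using assms by (simp add: sum_unity_root_period)
  qed
  also have "\<dots> = of_real (real N * (\<Sum>j<N. (v j)\<^sup>2))"
    by (simp add: sum_distrib_left power2_eq_square mult.commute)
  finally show ?thesis
    by (simp only: of_real_eq_iff)
qed

definition fourier_multiplier :: "nat \<Rightarrow> int set \<Rightarrow> (int \<Rightarrow> complex) \<Rightarrow> nat \<Rightarrow> nat \<Rightarrow> complex" where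
  "fourier_multiplier N S c j k = (\<Sum>l\<in>S. c l * unity_root N (l * (int j - int k))) / of_nat N"

lemma fourier_multiplier_mult:
  assumes "N > 0" and "finite S" and "inj_on (\<lambda>l. l mod int N) S"
  shows "(\<Sum>m<N. fourier_multiplier N S a j m * fourier_multiplier N S b m k)
    = fourier_multiplier N S (\<lambda>l. a l * b l) j k"
proof -
  have orthogonal: "(\<Sum>m<N. unity_root N ((l' - l) * int m)) = (if l' = l then of_nat N else 0)"
    if "l \<in> S" "l' \<in> S" for l l'
  proof -
    have "int N dvd l' - l \<longleftrightarrow> l' = l"
      using that assms(3) unfolding inj_on_def by (auto simp: mod_eq_dvd_iff [symmetric])
    then show ?thesis
      using assms(1) by (simp add: sum_unity_root)
  qed
  have "(\<Sum>m<N. fourier_multiplier N S a j m * fourier_multiplier N S b m k)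
      = (\<Sum>m<N. \<Sum>l\<in>S. \<Sum>l'\<in>S. a l * b l' * unity_root N (l * int j - l' * int k)
          * unity_root N ((l' - l) * int m)) / of_nat N ^ 2"
    unfolding fourier_multiplier_def sum_divide_distrib
    by (intro sum.cong refl)
      (simp add: sum_product power2_eq_square sum_divide_distrib unity_root_add [symmetric] algebra_simps)
  also have "\<dots> = (\<Sum>l\<in>S. \<Sum>l'\<in>S. a l * b l' * unity_root N (l * int j - l' * int k)
          * (\<Sum>m<N. unity_root N ((l' - l) * int m))) / of_nat N ^ 2"
    by (simp add: sum_distrib_left sum.swap [where A = "{..<N}"])
  also have "\<dots> = (\<Sum>l\<in>S. a l * b l * unity_root N (l * (int j - int k)) * of_nat N) / of_nat N ^ 2"
    by (intro arg_cong [where f = "\<lambda>x. x / _"] sum.cong refl)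
      (simp add: orthogonal if_distrib [where f = "\<lambda>x. _ * x"] assms(2) right_diff_distrib cong: if_cong)
  also have "\<dots> = fourier_multiplier N S (\<lambda>l. a l * b l) j k"
    by (simp add: fourier_multiplier_def power2_eq_square sum_distrib_right [symmetric])
  finally show ?thesis .
qed

lemma fourier_multiplier_quadratic_form:
  "(\<Sum>j<N. (\<Sum>k<N. fourier_multiplier N S c j k * of_real (u k)) * of_real (u j))
    = (\<Sum>l\<in>S. c l * of_real ((norm (dft N u l))\<^sup>2)) / of_nat N"
proof -
  define X where "X l j = of_real (u j) * unity_root N (l * int j)" for l j
  define Y where "Y l k = of_real (u k) * unity_root N (- (l * int k))" for l k
  have "unity_root N (l * (int j - int k)) = unity_root N (l * int j) * unity_root N (- (l * int k))" for l j k
    by (simp add: unity_root_add [symmetric] right_diff_distrib)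
  then have "(\<Sum>j<N. (\<Sum>k<N. fourier_multiplier N S c j k * of_real (u k)) * of_real (u j))
      = (\<Sum>j<N. \<Sum>k<N. \<Sum>l\<in>S. c l * (X l j * Y l k)) / of_nat N"
    unfolding fourier_multiplier_def sum_divide_distrib sum_distrib_right X_def Y_def
    by (simp add: mult_ac)
  also have "(\<Sum>j<N. \<Sum>k<N. \<Sum>l\<in>S. c l * (X l j * Y l k)) = (\<Sum>j<N. \<Sum>l\<in>S. \<Sum>k<N. c l * (X l j * Y l k))"
    by (intro sum.cong refl) (rule sum.swap)
  also have "\<dots> = (\<Sum>l\<in>S. \<Sum>j<N. \<Sum>k<N. c l * (X l j * Y l k))"
    by (rule sum.swap)
  also have "\<dots> = (\<Sum>l\<in>S. c l * ((\<Sum>j<N. X l j) * (\<Sum>k<N. Y l k)))"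
    unfolding sum_product by (simp only: sum_distrib_left)
  also have "\<dots> = (\<Sum>l\<in>S. c l * of_real ((norm (dft N u l))\<^sup>2))"
    unfolding complex_norm_square cnj_dft unfolding dft_def X_def Y_def by (simp only: mult.commute)
  finally show ?thesis .
qed

lemma has_vector_derivative_gbasis:
  "(gbasis lo hi N k has_vector_derivative
     (1 / of_nat N) * (\<Sum>l\<in>{-(int N div 2)..int N div 2}. of_real (1 / a_coef N l) *
        (\<i> * of_int l * of_real (2 * pi / (hi - lo)) *
         exp (\<i> * of_int l * of_real (2 * pi / (hi - lo)) * of_real (x - grid_pt lo hi N k))))) (at x)"
proof -
  have "((\<lambda>z. (1 / of_nat N) * (\<Sum>l\<in>{-(int N div 2)..int N div 2}. of_real (1 / a_coef N l) *
          exp (\<i> * of_int l * of_real (2 * pi / (hi - lo)) * (z - of_real (grid_pt lo hi N k)))))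
     has_field_derivative (1 / of_nat N) * (\<Sum>l\<in>{-(int N div 2)..int N div 2}. of_real (1 / a_coef N l) *
        (\<i> * of_int l * of_real (2 * pi / (hi - lo)) *
         exp (\<i> * of_int l * of_real (2 * pi / (hi - lo)) * of_real (x - grid_pt lo hi N k))))) (at (of_real x))"
    by (rule derivative_eq_intros refl)+ (simp add: mult.commute)
  from has_vector_derivative_real_field [OF this] show ?thesis
    by (simp add: gbasis_def [abs_def])
qed

lemma exp_grid_pt_diff:
  assumes "lo < hi" "N > 0"
  shows "exp (\<i> * of_int l * of_real (2 * pi / (hi - lo)) * of_real (grid_pt lo hi N j - grid_pt lo hi N k))
    = unity_root N (l * (int j - int k))"
proof -
  have grid: "grid_pt lo hi N j - grid_pt lo hi N k = (real j - real k) * ((hi - lo) / real N)"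
    by (simp add: grid_pt_def left_diff_distrib diff_divide_distrib)
  have "of_int l * (2 * pi / (hi - lo)) * (grid_pt lo hi N j - grid_pt lo hi N k)
      = 2 * pi * of_int (l * (int j - int k)) / real N"
    unfolding grid using assms by (simp add: field_simps)
  moreover have "\<i> * of_int l * of_real (2 * pi / (hi - lo)) * of_real (grid_pt lo hi N j - grid_pt lo hi N k)
      = \<i> * of_real (of_int l * (2 * pi / (hi - lo)) * (grid_pt lo hi N j - grid_pt lo hi N k))"
    by (simp add: mult_ac)
  ultimately show ?thesis
    by (simp only: unity_root_def cis_conv_exp)
qed

lemma Dmat_eq_fourier_multiplier:
  assumes "lo < hi" "even N" "N > 0"
  shows "Dmat lo hi N j k = fourier_multiplier N {-(int N div 2)<..<int N div 2}
    (\<lambda>l. \<i> * of_int l * of_real (2 * pi / (hi - lo))) j k"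
proof -
  define M where "M = int N div 2"
  define c where "c l = \<i> * of_int l * of_real (2 * pi / (hi - lo))" for l
  define d where "d = int j - int k"
  have N: "int N = 2 * M"
    using assms(2) by (simp add: M_def)
  have "M > 0"
    using assms(3) N by simp
  then have nyquist: "{-M..M} = insert (-M) (insert M {-M<..<M})"
    by auto
  have "Dmat lo hi N j k = 1 / of_nat N * (\<Sum>l\<in>{-M..M}. of_real (1 / a_coef N l) * (c l * unity_root N (l * d)))"
    unfolding Dmat_def vector_derivative_at [OF has_vector_derivative_gbasis] M_def c_def d_def
    by (simp only: exp_grid_pt_diff [OF assms(1,3)])
  txt \<open>The Nyquist modes \<open>l = \<plusminus>M\<close> carry weight \<open>1/2\<close> and cancel.\<close>
  also have "\<dots> = 1 / of_nat N * (c (-M) * unity_root N (-M * d) / 2 + c M * unity_root N (M * d) / 2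
      + (\<Sum>l\<in>{-M<..<M}. c l * unity_root N (l * d)))"
  proof -
    have "a_coef N l = 1" if "l \<in> {-M<..<M}" for l
      using that by (auto simp: a_coef_def M_def [symmetric])
    then show ?thesis
      using \<open>M > 0\<close> by (simp add: nyquist a_coef_def M_def [symmetric])
  qed
  also have "unity_root N (-M * d) = unity_root N (M * d)"
  proof (rule unity_root_cong [OF assms(3)])
    show "int N dvd -M * d - M * d"
      unfolding N by (simp add: algebra_simps)
  qed
  finally show ?thesis
    by (simp add: fourier_multiplier_def M_def c_def d_def)
qed

lemma inj_on_mod_centered_frequencies:
  assumes "even N"
  shows "inj_on (\<lambda>l. l mod int N) {-(int N div 2)<..<int N div 2}"
proof (rule inj_onI)
  fix l l'
  assume "l \<in> {-(int N div 2)<..<int N div 2}" "l' \<in> {-(int N div 2)<..<int N div 2}"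
  moreover have "int N = 2 * (int N div 2)"
    using assms by simp
  ultimately have small: "\<bar>l - l'\<bar> < int N"
    unfolding greaterThanLessThan_iff abs_less_iff by linarith
  assume "l mod int N = l' mod int N"
  then have "int N dvd l - l'"
    by (simp add: mod_eq_dvd_iff)
  then have "l - l' = 0"
    using small dvd_imp_le_int [of "l - l'" "int N"] by linarith
  then show "l = l'"
    by simp
qed

lemma D2mat_eq_fourier_multiplier:
  assumes "lo < hi" "even N" "N > 0"
  shows "D2mat lo hi N j k = fourier_multiplier N {-(int N div 2)<..<int N div 2}
    (\<lambda>l. (\<i> * of_int l * of_real (2 * pi / (hi - lo)))\<^sup>2) j k"
  unfolding D2mat_def Dmat_eq_fourier_multiplier [OF assms] power2_eq_square
  by (rule fourier_multiplier_mult [OF assms(3) _ inj_on_mod_centered_frequencies [OF assms(2)]]) simp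

definition spectral_energy :: "real \<Rightarrow> real \<Rightarrow> nat \<Rightarrow> (nat \<Rightarrow> real) \<Rightarrow> real" where
  "spectral_energy lo hi N u = - Re (\<Sum>j<N. (\<Sum>k<N. D2mat lo hi N j k * of_real (u k)) * of_real (u j))"

definition difference_energy :: "real \<Rightarrow> real \<Rightarrow> nat \<Rightarrow> (nat \<Rightarrow> real) \<Rightarrow> real" where
  "difference_energy lo hi N u = (\<Sum>j<N. ((u ((j + 1) mod N) - u j) / ((hi - lo) / real N))\<^sup>2)"

lemma spectral_energy_eq:
  assumes "lo < hi" "even N" "N > 0"
  shows "spectral_energy lo hi N u = (\<Sum>l\<in>{-(int N div 2)<..<int N div 2}.
    (of_int l * (2 * pi / (hi - lo)))\<^sup>2 * (norm (dft N u l))\<^sup>2) / real N"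
proof -
  have "(\<i> * of_int l * of_real (2 * pi / (hi - lo)))\<^sup>2 = - of_real ((of_int l * (2 * pi / (hi - lo)))\<^sup>2)" for l
    by (simp only: mult.assoc power_mult_distrib) simp
  then show ?thesis
    unfolding spectral_energy_def D2mat_eq_fourier_multiplier [OF assms] fourier_multiplier_quadratic_form
    by (simp add: Re_divide_of_nat sum_negf)
qed

lemma jordan_inequality:
  assumes "0 \<le> x" "x \<le> pi / 2"
  shows "2 / pi * x \<le> sin x"
proof -
  have convex: "convex_on {0..pi} (\<lambda>x. - sin x)"
    by (rule f''_ge0_imp_convex [where f' = "\<lambda>x. - cos x" and f'' = sin])
      (auto intro!: derivative_eq_intros sin_ge_zero)
  define t where "t = 2 / pi * x"
  have "0 \<le> t" "t \<le> 1"
    using assms by (simp_all add: t_def divide_le_eq)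
  then have "- sin ((1 - t) *\<^sub>R 0 + t *\<^sub>R (pi / 2)) \<le> (1 - t) * (- sin 0) + t * (- sin (pi / 2))"
    by (intro convex_onD [OF convex]) auto
  moreover have "(1 - t) *\<^sub>R 0 + t *\<^sub>R (pi / 2) = x"
    by (simp add: t_def)
  ultimately show ?thesis
    by (simp add: t_def)
qed

lemma frequency_sq_le_difference_symbol:
  assumes "L > 0" "N > 0" "2 * \<bar>l\<bar> \<le> int N"
  shows "(of_int l * (2 * pi / L))\<^sup>2 \<le> (pi / 2)\<^sup>2 * (norm ((unity_root N l - 1) / of_real (L / real N)))\<^sup>2"
proof -
  define x where "x = pi * of_int l / real N"
  have "\<bar>x\<bar> \<le> pi / 2"
    using assms(2,3) by (simp add: x_def abs_mult field_simps)
  then have "2 / pi * \<bar>x\<bar> \<le> \<bar>sin x\<bar>"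
    using jordan_inequality [of "\<bar>x\<bar>"] by (cases "x \<ge> 0") auto
  then have "\<bar>2 / pi * x\<bar> \<le> \<bar>sin x\<bar>"
    by (simp add: abs_mult)
  then have jordan: "(2 / pi * x)\<^sup>2 \<le> (sin x)\<^sup>2"
    by (metis abs_ge_zero power2_abs power_mono)
  have "of_int l * (2 * pi / L) = 2 / pi * x * (pi * real N / L)"
    using assms(2) by (simp add: x_def)
  then have "(of_int l * (2 * pi / L))\<^sup>2 = (2 / pi * x)\<^sup>2 * (pi * real N / L)\<^sup>2"
    by (simp only: power_mult_distrib)
  also have "\<dots> \<le> (sin x)\<^sup>2 * (pi * real N / L)\<^sup>2"
    using jordan by (rule mult_right_mono) simp
  also have "(sin x)\<^sup>2 * (pi * real N / L)\<^sup>2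
      = (pi / 2)\<^sup>2 * (norm ((unity_root N l - 1) / of_real (L / real N)))\<^sup>2"
  proof -
    have "(norm ((unity_root N l - 1) / of_real (L / real N)))\<^sup>2 = 4 * (sin x)\<^sup>2 * (real N / L)\<^sup>2"
      using assms(1,2) unfolding norm_divide norm_of_real norm_unity_root_minus_1_sq [symmetric] x_def
      by (simp add: power_divide power_mult_distrib)
    then show ?thesis
      by (simp add: power_mult_distrib power_divide)
  qed
  finally show ?thesis .
qed

lemma spectral_energy_le_difference_energy:
  assumes "lo < hi" "even N" "N > 0"
  shows "spectral_energy lo hi N u \<le> (pi / 2)\<^sup>2 * difference_energy lo hi N u"
proof -
  define M where "M = int N div 2"
  define h where "h = (hi - lo) / real N"
  define v where "v j = (u ((j + 1) mod N) - u j) / h" for j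
  have N: "int N = 2 * M"
    using assms(2) by (simp add: M_def)
  have "(\<Sum>l\<in>{-M<..<M}. (of_int l * (2 * pi / (hi - lo)))\<^sup>2 * (norm (dft N u l))\<^sup>2)
      \<le> (\<Sum>l\<in>{-M<..<M}. (pi / 2)\<^sup>2 * (norm (dft N v l))\<^sup>2)"
  proof (rule sum_mono)
    fix l
    assume "l \<in> {-M<..<M}"
    then have "2 * \<bar>l\<bar> \<le> int N"
      using N by auto
    with assms have "(of_int l * (2 * pi / (hi - lo)))\<^sup>2 \<le> (pi / 2)\<^sup>2 * (norm ((unity_root N l - 1) / of_real h))\<^sup>2"
      unfolding h_def by (intro frequency_sq_le_difference_symbol) auto
    then show "(of_int l * (2 * pi / (hi - lo)))\<^sup>2 * (norm (dft N u l))\<^sup>2 \<le> (pi / 2)\<^sup>2 * (norm (dft N v l))\<^sup>2"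
      unfolding v_def dft_divided_difference [OF assms(3)] norm_mult power_mult_distrib mult.assoc [symmetric]
      by (rule mult_right_mono) simp
  qed
  also have "\<dots> \<le> (\<Sum>l\<in>{1 - M..<(1 - M) + int N}. (pi / 2)\<^sup>2 * (norm (dft N v l))\<^sup>2)"
    by (rule sum_mono2) (auto simp: N)
  also have "\<dots> = (pi / 2)\<^sup>2 * (real N * (\<Sum>j<N. (v j)\<^sup>2))"
    by (simp add: sum_distrib_left [symmetric] parseval_dft [OF assms(3)])
  finally show ?thesis
    using assms(3) unfolding spectral_energy_eq [OF assms] difference_energy_def
    by (simp add: M_def v_def h_def pos_divide_le_eq mult_ac)
qed

lemma semi1_sq_eq_spectral_energy:
  "semi1_sq xL xR N1 yL yR N2 U = (xR - xL) / real N1 * ((yR - yL) / real N2) *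
    ((\<Sum>j2<N2. spectral_energy xL xR N1 (\<lambda>j1. U j1 j2)) + (\<Sum>j1<N1. spectral_energy yL yR N2 (U j1)))"
proof -
  have "(\<Sum>j1<N1. \<Sum>j2<N2.
          - ((\<Sum>k<N1. D2mat xL xR N1 j1 k * of_real (U k j2)) + (\<Sum>k<N2. D2mat yL yR N2 j2 k * of_real (U j1 k)))
          * of_real (U j1 j2))
      = - (\<Sum>j2<N2. \<Sum>j1<N1. (\<Sum>k<N1. D2mat xL xR N1 j1 k * of_real (U k j2)) * of_real (U j1 j2))
        - (\<Sum>j1<N1. \<Sum>j2<N2. (\<Sum>k<N2. D2mat yL yR N2 j2 k * of_real (U j1 k)) * of_real (U j1 j2))"
    by (simp add: distrib_right sum.distrib sum_negf sum_subtractf sum.swap [where A = "{..<N1}"] algebra_simps)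
  then show ?thesis
    by (simp add: semi1_sq_def spectral_energy_def Re_sum sum_negf)
qed

lemma grad_norm_sq_eq_difference_energy:
  "grad_norm_sq xL xR N1 yL yR N2 U = (xR - xL) / real N1 * ((yR - yL) / real N2) *
    ((\<Sum>j2<N2. difference_energy xL xR N1 (\<lambda>j1. U j1 j2)) + (\<Sum>j1<N1. difference_energy yL yR N2 (U j1)))"
proof -
  have "(\<Sum>j1<N1. \<Sum>j2<N2. dxp xL xR N1 N2 U j1 j2 * dxp xL xR N1 N2 U j1 j2)
      = (\<Sum>j2<N2. difference_energy xL xR N1 (\<lambda>j1. U j1 j2))"
    unfolding difference_energy_def sum.swap [where A = "{..<N1}"]
    by (intro sum.cong refl) (simp add: dxp_def power2_eq_square)
  moreover have "(\<Sum>j1<N1. \<Sum>j2<N2. dyp yL yR N1 N2 U j1 j2 * dyp yL yR N1 N2 U j1 j2)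
      = (\<Sum>j1<N1. difference_energy yL yR N2 (U j1))"
    unfolding difference_energy_def
    by (intro sum.cong refl) (simp add: dyp_def power2_eq_square)
  ultimately show ?thesis
    by (simp add: grad_norm_sq_def inner_h_def distrib_left)
qed

theorem lemma2p4:
  fixes xL xR yL yR :: real and N1 N2 :: nat and U :: "nat \<Rightarrow> nat \<Rightarrow> real"
  assumes "xL < xR" and "yL < yR"
    and "even N1" and "even N2" and "N1 > 0" and "N2 > 0"
  shows "sqrt (semi1_sq xL xR N1 yL yR N2 U) \<le> pi / 2 * sqrt (grad_norm_sq xL xR N1 yL yR N2 U)"
proof -
  define cell where "cell = (xR - xL) / real N1 * ((yR - yL) / real N2)"
  have "cell \<ge> 0"
    using assms by (simp add: cell_def)
  moreover have "(\<Sum>j2<N2. spectral_energy xL xR N1 (\<lambda>j1. U j1 j2))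
      \<le> (pi / 2)\<^sup>2 * (\<Sum>j2<N2. difference_energy xL xR N1 (\<lambda>j1. U j1 j2))"
    unfolding sum_distrib_left using assms by (intro sum_mono spectral_energy_le_difference_energy)
  moreover have "(\<Sum>j1<N1. spectral_energy yL yR N2 (U j1))
      \<le> (pi / 2)\<^sup>2 * (\<Sum>j1<N1. difference_energy yL yR N2 (U j1))"
    unfolding sum_distrib_left using assms by (intro sum_mono spectral_energy_le_difference_energy)
  ultimately have "semi1_sq xL xR N1 yL yR N2 U \<le> cell * ((pi / 2)\<^sup>2 *
      (\<Sum>j2<N2. difference_energy xL xR N1 (\<lambda>j1. U j1 j2)) +
      (pi / 2)\<^sup>2 * (\<Sum>j1<N1. difference_energy yL yR N2 (U j1)))"
    unfolding semi1_sq_eq_spectral_energy cell_def [symmetric] by (intro mult_left_mono add_mono)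
  also have "\<dots> = (pi / 2)\<^sup>2 * grad_norm_sq xL xR N1 yL yR N2 U"
    unfolding grad_norm_sq_eq_difference_energy cell_def [symmetric] by (simp add: algebra_simps)
  finally have "sqrt (semi1_sq xL xR N1 yL yR N2 U) \<le> sqrt ((pi / 2)\<^sup>2 * grad_norm_sq xL xR N1 yL yR N2 U)"
    by simp
  also have "\<dots> = pi / 2 * sqrt (grad_norm_sq xL xR N1 yL yR N2 U)"
    by (simp add: real_sqrt_mult)
  finally show ?thesis .
qed

end
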